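(* Consider observations $y_i = y(t_i) = F(x_0)(t_i) + \epsilon_i$, $i=1,\dots,n$, where $F:\mathbf X\to\mathbf Y$ is a known linear operator between Hilbert spaces of real functions, $t_1,\dots,t_n$ is a fixed design, and $\epsilon_1,\dots,\epsilon_n$ are independent errors with zero mean and finite variance $\sigma^2$. Let $(\lambda_j;\varphi_j,\psi_j)_{j=1,\dots,n}$ be a singular system of $F$ as described in the context, write $x_0=\sum_{j=1}^n x_{j,0}\psi_j$, fix a constant $c>0$ and put $\mu_j = \frac{2c}{\lambda_j}\sqrt{\frac{\log n}{n}}$, $j=1,\dots,n$. Let $$\hat x_n=\sum_{j=1}^n \hat x_j\psi_j \in \arg\min_{x=\sum_{j=1}^n x_j\psi_j\in \mathbf X}\Big[\sum_{j=1}^n\Big|\Big\langle y-F(x),\frac{\varphi_j}{\lambda_j}\Big\rangle_n\Big|^2+\sum_{j=1}^n\mu_j|x_j|\Big].$$ Let $x_*=\sum_{j=1}^n x_{j,*}\psi_j$ with $x_{j,*}=x_{j,0}$ if $|x_{j,0}|>\mu_j$ and $x_{j,*}=0$ otherwise, let $\mathcal J_n=\{j\in\{1,\dots,n\}: |x_{j,0}|>\mu_j\}$, let $V_j=\frac1n\sum_{i=1}^n\varphi_j(t_i)\epsilon_i$, and let $B_n$ be the event $\{\max_{j=1,\dots,n}|V_j|\le c\sqrt{\log n/n}\}$. Then on $B_n$, $$\|\hat x_n-x_0\|_n^2\le \|x_*-x_0\|_n^2+4c\sqrt{\frac{\log n}{n}}\sum_{j\in\mathcal J_n}\frac{|\hat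 x_j-x_{j,0}|}{\lambda_j}.$$
   Context: The empirical norm is $\|y\|_n^2=\frac1n\sum_{i=1}^n y(t_i)^2$ with empirical inner product $\langle y,z\rangle_n=\frac1n\sum_{i=1}^n y(t_i)z(t_i)$; for $y=(y_i)$ a data vector, $\langle y,\varphi\rangle_n=\frac1n\sum_i y_i\varphi(t_i)$. The singular system satisfies $F\psi_j=\lambda_j\varphi_j$, $F^*\varphi_j=\lambda_j\psi_j$, where $\lambda_j^2>0$ are the nonzero eigenvalues of $F^*F$ in decreasing order, and $\{\psi_j\}$, $\{\varphi_j\}$ are complete orthonormal systems with respect to $\|\cdot\|_n$ of eigenvectors of $F^*F$ and $FF^*$ respectively; thus $Fx=\sum_j\lambda_j\langle x,\psi_j\rangle\varphi_j$, and for $x=\sum_j x_j\psi_j$, $\|x\|_n^2=\sum_j x_j^2$. *)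

theory Defs
  imports "HOL-Probability.Probability"
begin

definition emp_inner :: "nat \<Rightarrow> (nat \<Rightarrow> 't) \<Rightarrow> ('t \<Rightarrow> real) \<Rightarrow> ('t \<Rightarrow> real) \<Rightarrow> real" where
  "emp_inner n t f g = (1 / real n) * (\<Sum>i=1..n. f (t i) * g (t i))"

definition emp_norm2 :: "nat \<Rightarrow> (nat \<Rightarrow> 't) \<Rightarrow> ('t \<Rightarrow> real) \<Rightarrow> real" where
  "emp_norm2 n t f = emp_inner n t f f"

definition emp_inner_data :: "nat \<Rightarrow> (nat \<Rightarrow> 't) \<Rightarrow> (nat \<Rightarrow> real) \<Rightarrow> ('t \<Rightarrow> real) \<Rightarrow> real" where
  "emp_inner_data n t y g = (1 / real n) * (\<Sum>i=1..n. y i * g (t i))"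

definition expand :: "nat \<Rightarrow> (nat \<Rightarrow> 't \<Rightarrow> real) \<Rightarrow> (nat \<Rightarrow> real) \<Rightarrow> ('t \<Rightarrow> real)" where
  "expand n \<psi> c = (\<lambda>s. \<Sum>j=1..n. c j * \<psi> j s)"

definition objective ::
  "nat \<Rightarrow> (nat \<Rightarrow> 't) \<Rightarrow> (('t \<Rightarrow> real) \<Rightarrow> ('t \<Rightarrow> real)) \<Rightarrow> (nat \<Rightarrow> real)
   \<Rightarrow> (nat \<Rightarrow> 't \<Rightarrow> real) \<Rightarrow> (nat \<Rightarrow> 't \<Rightarrow> real) \<Rightarrow> (nat \<Rightarrow> real) \<Rightarrow> (nat \<Rightarrow> real)
   \<Rightarrow> (nat \<Rightarrow> real) \<Rightarrow> real" where
  "objective n t F lam \<phi> \<psi> \<mu> y c =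
     (\<Sum>j=1..n. \<bar>emp_inner_data n t (\<lambda>i. y i - F (expand n \<psi> c) (t i)) (\<lambda>s. \<phi> j s / lam j)\<bar>^2)
     + (\<Sum>j=1..n. \<mu> j * \<bar>c j\<bar>)"

end

theory Submission
  imports Defs
begin

text \<open>In the singular basis the objective separates into one-dimensional problems
  \<open>(x\<^sub>0\<^sub>,\<^sub>k - x\<^sub>k + w\<^sub>k)\<^sup>2 + \<mu>\<^sub>k \<bar>x\<^sub>k\<bar>\<close> with noise \<open>w\<^sub>k = V\<^sub>k / \<lambda>\<^sub>k\<close>, and the empirical
  norm becomes the Euclidean norm of the coefficients. On \<open>B\<^sub>n\<close> we have \<open>\<bar>w\<^sub>k\<bar> \<le> \<mu>\<^sub>k / 2\<close>.
  Comparing the objective at the minimiser with its value at the hard-thresholded oracle \<open>x\<^sub>*\<close>,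
  the cross terms \<open>2 (x\<^sub>k - x\<^sub>0\<^sub>,\<^sub>k) w\<^sub>k\<close> are absorbed by the penalty, except on the kept
  coordinates, where the penalty difference costs a further \<open>\<mu>\<^sub>k \<bar>x\<^sub>k - x\<^sub>0\<^sub>,\<^sub>k\<bar>\<close>.
  The argument is deterministic on \<open>B\<^sub>n\<close>.\<close>

lemma emp_inner_sum_left:
  "emp_inner n t (\<lambda>s. \<Sum>j\<in>A. a j * f j s) g = (\<Sum>j\<in>A. a j * emp_inner n t (f j) g)"
  unfolding emp_inner_def
  by (simp add: sum_distrib_left sum_distrib_right mult.assoc mult.left_commute sum.swap[of _ A])

lemma emp_inner_sum_right:
  "emp_inner n t g (\<lambda>s. \<Sum>j\<in>A. a j * f j s) = (\<Sum>j\<in>A. a j * emp_inner n t g (f j))"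
  unfolding emp_inner_def
  by (simp add: sum_distrib_left sum_distrib_right mult.assoc mult.left_commute sum.swap[of _ A])

lemma emp_norm2_expand_diff:
  assumes psi_on: "\<And>j k. j \<in> {1..n} \<Longrightarrow> k \<in> {1..n} \<Longrightarrow>
                     emp_inner n t (\<psi> j) (\<psi> k) = (if j = k then 1 else 0)"
  shows "emp_norm2 n t (\<lambda>s. expand n \<psi> a s - expand n \<psi> b s) = (\<Sum>j=1..n. (a j - b j)\<^sup>2)"
proof -
  have diff: "(\<lambda>s. expand n \<psi> a s - expand n \<psi> b s) = (\<lambda>s. \<Sum>j=1..n. (a j - b j) * \<psi> j s)"
    unfolding expand_def by (simp add: sum_subtractf left_diff_distrib)
  have "emp_norm2 n t (\<lambda>s. \<Sum>j=1..n. (a j - b j) * \<psi> j s)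
      = (\<Sum>j=1..n. (a j - b j) * (\<Sum>k=1..n. (a k - b k) * emp_inner n t (\<psi> j) (\<psi> k)))"
    unfolding emp_norm2_def emp_inner_sum_left emp_inner_sum_right ..
  also have "\<dots> = (\<Sum>j=1..n. (a j - b j) * (a j - b j))"
    by (intro sum.cong refl) (simp add: psi_on if_distrib cong: if_cong)
  finally show ?thesis unfolding diff by (simp add: power2_eq_square)
qed

lemma residual_coefficient_svd:
  assumes phi_on: "\<And>j k. j \<in> {1..n} \<Longrightarrow> k \<in> {1..n} \<Longrightarrow>
                     emp_inner n t (\<phi> j) (\<phi> k) = (if j = k then 1 else 0)"
    and F_svd: "\<And>a. F (expand n \<psi> a) = (\<lambda>s. \<Sum>j=1..n. lam j * a j * \<phi> j s)"
    and k: "k \<in> {1..n}" and lam_k: "lam k \<noteq> 0"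
  shows "emp_inner_data n t (\<lambda>i. F (expand n \<psi> x0) (t i) + e i - F (expand n \<psi> a) (t i))
           (\<lambda>s. \<phi> k s / lam k)
         = x0 k - a k + emp_inner_data n t e (\<phi> k) / lam k"
proof -
  define g where "g = (\<lambda>s. \<Sum>j=1..n. (lam j * (x0 j - a j)) * \<phi> j s)"
  have residual: "(\<lambda>i. F (expand n \<psi> x0) (t i) + e i - F (expand n \<psi> a) (t i))
      = (\<lambda>i. g (t i) + e i)"
    unfolding g_def F_svd by (auto simp: sum_subtractf algebra_simps)
  have "emp_inner_data n t (\<lambda>i. g (t i) + e i) (\<lambda>s. \<phi> k s / lam k)
      = emp_inner n t g (\<phi> k) / lam k + emp_inner_data n t e (\<phi> k) / lam k"
    unfolding emp_inner_data_def emp_inner_def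
    by (simp add: distrib_right sum.distrib add_divide_distrib sum_divide_distrib[symmetric]
        mult.commute[of "lam k"] flip: distrib_left)
  also have "emp_inner n t g (\<phi> k) = lam k * (x0 k - a k)"
    unfolding g_def emp_inner_sum_left using k by (simp add: phi_on if_distrib cong: if_cong)
  finally show ?thesis unfolding residual using lam_k by simp
qed

lemma objective_eq_coordinate_sum:
  assumes phi_on: "\<And>j k. j \<in> {1..n} \<Longrightarrow> k \<in> {1..n} \<Longrightarrow>
                     emp_inner n t (\<phi> j) (\<phi> k) = (if j = k then 1 else 0)"
    and F_svd: "\<And>a. F (expand n \<psi> a) = (\<lambda>s. \<Sum>j=1..n. lam j * a j * \<phi> j s)"
    and lam_nz: "\<And>k. k \<in> {1..n} \<Longrightarrow> lam k \<noteq> 0"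
  shows "objective n t F lam \<phi> \<psi> \<mu> (\<lambda>i. F (expand n \<psi> x0) (t i) + e i) a
       = (\<Sum>k=1..n. (x0 k - a k + emp_inner_data n t e (\<phi> k) / lam k)\<^sup>2 + \<mu> k * \<bar>a k\<bar>)"
proof -
  have coefficient: "\<bar>emp_inner_data n t (\<lambda>i. F (expand n \<psi> x0) (t i) + e i - F (expand n \<psi> a) (t i))
           (\<lambda>s. \<phi> k s / lam k)\<bar>\<^sup>2
      = (x0 k - a k + emp_inner_data n t e (\<phi> k) / lam k)\<^sup>2" if "k \<in> {1..n}" for k
    using residual_coefficient_svd[OF phi_on F_svd that lam_nz[OF that]] by simp
  have "(\<Sum>k=1..n. \<bar>emp_inner_data n t
             (\<lambda>i. F (expand n \<psi> x0) (t i) + e i - F (expand n \<psi> a) (t i))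
             (\<lambda>s. \<phi> k s / lam k)\<bar>\<^sup>2)
      = (\<Sum>k=1..n. (x0 k - a k + emp_inner_data n t e (\<phi> k) / lam k)\<^sup>2)"
    by (rule sum.cong[OF refl]) (rule coefficient)
  then show ?thesis
    unfolding objective_def sum.distrib by simp
qed

lemma penalized_gap_kept_coordinate:
  fixes x x0 w m :: real
  assumes "\<bar>w\<bar> \<le> m / 2" "m \<ge> 0"
  shows "(x - x0)\<^sup>2 - 2 * m * \<bar>x - x0\<bar> \<le> ((x0 - x + w)\<^sup>2 + m * \<bar>x\<bar>) - (w\<^sup>2 + m * \<bar>x0\<bar>)"
proof -
  have "\<bar>2 * (x - x0) * w\<bar> = \<bar>x - x0\<bar> * (2 * \<bar>w\<bar>)"
    by (simp only: abs_mult abs_numeral)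
  also have "\<dots> \<le> \<bar>x - x0\<bar> * m"
    using assms by (intro mult_left_mono) auto
  finally have "\<bar>2 * (x - x0) * w\<bar> \<le> m * \<bar>x - x0\<bar>"
    by (simp add: mult.commute)
  moreover have "m * \<bar>x0\<bar> - m * \<bar>x\<bar> \<le> m * \<bar>x - x0\<bar>"
    using mult_left_mono[of "\<bar>x0\<bar> - \<bar>x\<bar>" "\<bar>x - x0\<bar>" m] assms(2) by (simp add: right_diff_distrib)
  ultimately show ?thesis by (simp add: power2_eq_square algebra_simps)
qed

lemma penalized_gap_killed_coordinate:
  fixes x x0 w m :: real
  assumes "\<bar>w\<bar> \<le> m / 2" "m \<ge> 0"
  shows "(x - x0)\<^sup>2 - x0\<^sup>2 \<le> ((x0 - x + w)\<^sup>2 + m * \<bar>x\<bar>) - (x0 + w)\<^sup>2"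
proof -
  have "\<bar>2 * x * w\<bar> = \<bar>x\<bar> * (2 * \<bar>w\<bar>)"
    by (simp only: abs_mult abs_numeral)
  also have "\<dots> \<le> \<bar>x\<bar> * m"
    using assms by (intro mult_left_mono) auto
  finally have "\<bar>2 * x * w\<bar> \<le> m * \<bar>x\<bar>"
    by (simp add: mult.commute)
  thus ?thesis by (simp add: power2_eq_square algebra_simps)
qed

lemma hard_threshold_oracle_inequality:
  fixes x x0 w m :: "nat \<Rightarrow> real"
  defines "xs \<equiv> \<lambda>k. if \<bar>x0 k\<bar> > m k then x0 k else 0"
  assumes "finite I"
    and noise: "\<And>k. k \<in> I \<Longrightarrow> \<bar>w k\<bar> \<le> m k / 2"
    and m_nonneg: "\<And>k. k \<in> I \<Longrightarrow> m k \<ge> 0"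
    and minimal: "(\<Sum>k\<in>I. (x0 k - x k + w k)\<^sup>2 + m k * \<bar>x k\<bar>)
                  \<le> (\<Sum>k\<in>I. (x0 k - xs k + w k)\<^sup>2 + m k * \<bar>xs k\<bar>)"
  shows "(\<Sum>k\<in>I. (x k - x0 k)\<^sup>2)
         \<le> (\<Sum>k\<in>I. (xs k - x0 k)\<^sup>2) + 2 * (\<Sum>k\<in>{k\<in>I. \<bar>x0 k\<bar> > m k}. m k * \<bar>x k - x0 k\<bar>)"
proof -
  define slack where "slack k = (if \<bar>x0 k\<bar> > m k then 2 * m k * \<bar>x k - x0 k\<bar> else 0)" for k
  have coordinate: "(x k - x0 k)\<^sup>2 - (xs k - x0 k)\<^sup>2 - slack k
      \<le> ((x0 k - x k + w k)\<^sup>2 + m k * \<bar>x k\<bar>) - ((x0 k - xs k + w k)\<^sup>2 + m k * \<bar>xs k\<bar>)"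
    if "k \<in> I" for k
    using penalized_gap_kept_coordinate[OF noise m_nonneg, OF that that, of "x k" "x0 k"]
      penalized_gap_killed_coordinate[OF noise m_nonneg, OF that that, of "x k" "x0 k"]
    by (simp add: xs_def slack_def)
  have "(\<Sum>k\<in>I. (x k - x0 k)\<^sup>2 - (xs k - x0 k)\<^sup>2 - slack k)
      \<le> (\<Sum>k\<in>I. ((x0 k - x k + w k)\<^sup>2 + m k * \<bar>x k\<bar>) - ((x0 k - xs k + w k)\<^sup>2 + m k * \<bar>xs k\<bar>))"
    by (rule sum_mono) (rule coordinate)
  also have "\<dots> \<le> 0"
    using minimal by (simp add: sum_subtractf)
  finally have "(\<Sum>k\<in>I. (x k - x0 k)\<^sup>2 - (xs k - x0 k)\<^sup>2 - slack k) \<le> 0" .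
  moreover have "(\<Sum>k\<in>I. slack k) = 2 * (\<Sum>k\<in>{k\<in>I. \<bar>x0 k\<bar> > m k}. m k * \<bar>x k - x0 k\<bar>)"
    using \<open>finite I\<close> by (auto simp: slack_def sum.inter_filter sum_distrib_left intro!: sum.cong)
  ultimately show ?thesis by (simp add: sum_subtractf)
qed

theorem theorem1:
  fixes M :: "'w measure"
    and n :: nat and t :: "nat \<Rightarrow> 't"
    and F :: "('t \<Rightarrow> real) \<Rightarrow> ('t \<Rightarrow> real)"
    and lam :: "nat \<Rightarrow> real" and \<phi> \<psi> :: "nat \<Rightarrow> 't \<Rightarrow> real"
    and x0 :: "nat \<Rightarrow> real" and \<epsilon> :: "nat \<Rightarrow> 'w \<Rightarrow> real" and \<sigma> c :: real
    and xhat :: "'w \<Rightarrow> nat \<Rightarrow> real" and \<omega> :: 'w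
  assumes prob: "prob_space M"
    and rv: "\<And>i. i \<in> {1..n} \<Longrightarrow> \<epsilon> i \<in> borel_measurable M"
    and indep: "prob_space.indep_vars M (\<lambda>_. borel) \<epsilon> {1..n}"
    and sq_int: "\<And>i. i \<in> {1..n} \<Longrightarrow> integrable M (\<lambda>w. (\<epsilon> i w)^2)"
    and mean0: "\<And>i. i \<in> {1..n} \<Longrightarrow> prob_space.expectation M (\<epsilon> i) = 0"
    and var: "\<And>i. i \<in> {1..n} \<Longrightarrow> prob_space.variance M (\<epsilon> i) = \<sigma>^2"
    and n_pos: "n \<ge> 1"
    and lam_pos: "\<And>j. j \<in> {1..n} \<Longrightarrow> lam j > 0"
    and lam_decr: "\<And>j k. 1 \<le> j \<Longrightarrow> j \<le> k \<Longrightarrow> k \<le> n \<Longrightarrow> lam k \<le> lam j"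
    and phi_on: "\<And>j k. j \<in> {1..n} \<Longrightarrow> k \<in> {1..n} \<Longrightarrow>
                   emp_inner n t (\<phi> j) (\<phi> k) = (if j = k then 1 else 0)"
    and psi_on: "\<And>j k. j \<in> {1..n} \<Longrightarrow> k \<in> {1..n} \<Longrightarrow>
                   emp_inner n t (\<psi> j) (\<psi> k) = (if j = k then 1 else 0)"
    and F_svd: "\<And>a. F (expand n \<psi> a) = (\<lambda>s. \<Sum>j=1..n. lam j * a j * \<phi> j s)"
    and c_pos: "c > 0"
    and argmin: "\<And>w a. w \<in> space M \<Longrightarrow>
        objective n t F lam \<phi> \<psi> (\<lambda>j. 2 * c / lam j * sqrt (ln (real n) / real n))
          (\<lambda>i. F (expand n \<psi> x0) (t i) + \<epsilon> i w) (xhat w)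
        \<le> objective n t F lam \<phi> \<psi> (\<lambda>j. 2 * c / lam j * sqrt (ln (real n) / real n))
          (\<lambda>i. F (expand n \<psi> x0) (t i) + \<epsilon> i w) a"
    and \<omega>_in: "\<omega> \<in> space M"
    and B_n: "\<forall>j\<in>{1..n}. \<bar>(1 / real n) * (\<Sum>i=1..n. \<phi> j (t i) * \<epsilon> i \<omega>)\<bar>
                 \<le> c * sqrt (ln (real n) / real n)"
  shows "emp_norm2 n t (\<lambda>s. expand n \<psi> (xhat \<omega>) s - expand n \<psi> x0 s)
         \<le> emp_norm2 n t (\<lambda>s. expand n \<psi>
               (\<lambda>j. if \<bar>x0 j\<bar> > 2 * c / lam j * sqrt (ln (real n) / real n) then x0 j else 0) s
             - expand n \<psi> x0 s)
           + 4 * c * sqrt (ln (real n) / real n) *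
             (\<Sum>j\<in>{j\<in>{1..n}. \<bar>x0 j\<bar> > 2 * c / lam j * sqrt (ln (real n) / real n)}.
                \<bar>xhat \<omega> j - x0 j\<bar> / lam j)"
proof -
  define r where "r = sqrt (ln (real n) / real n)"
  define \<mu> where "\<mu> = (\<lambda>j. 2 * c / lam j * r)"
  define w where "w k = emp_inner_data n t (\<lambda>i. \<epsilon> i \<omega>) (\<phi> k) / lam k" for k
  define xs where "xs = (\<lambda>k. if \<bar>x0 k\<bar> > \<mu> k then x0 k else 0)"
  have r_nonneg: "r \<ge> 0"
    using n_pos unfolding r_def by simp
  have noise: "\<bar>w k\<bar> \<le> \<mu> k / 2" if k: "k \<in> {1..n}" for k
  proof -
    have "\<bar>emp_inner_data n t (\<lambda>i. \<epsilon> i \<omega>) (\<phi> k)\<bar> \<le> c * r"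
      using B_n k unfolding emp_inner_data_def r_def by (simp add: mult.commute)
    thus ?thesis
      using lam_pos[OF k] unfolding w_def \<mu>_def by (simp add: abs_div field_simps)
  qed
  have \<mu>_nonneg: "\<mu> k \<ge> 0" if "k \<in> {1..n}" for k
    using lam_pos[OF that] c_pos r_nonneg unfolding \<mu>_def by simp
  have lam_nz: "\<And>k. k \<in> {1..n} \<Longrightarrow> lam k \<noteq> 0"
    using lam_pos by force
  have "objective n t F lam \<phi> \<psi> \<mu> (\<lambda>i. F (expand n \<psi> x0) (t i) + \<epsilon> i \<omega>) (xhat \<omega>)
      \<le> objective n t F lam \<phi> \<psi> \<mu> (\<lambda>i. F (expand n \<psi> x0) (t i) + \<epsilon> i \<omega>) xs"
    using argmin[OF \<omega>_in] unfolding \<mu>_def r_def .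
  then have minimal: "(\<Sum>k=1..n. (x0 k - xhat \<omega> k + w k)\<^sup>2 + \<mu> k * \<bar>xhat \<omega> k\<bar>)
      \<le> (\<Sum>k=1..n. (x0 k - xs k + w k)\<^sup>2 + \<mu> k * \<bar>xs k\<bar>)"
    using objective_eq_coordinate_sum[OF phi_on F_svd lam_nz, where e="\<lambda>i. \<epsilon> i \<omega>"]
    unfolding w_def by simp
  have "(\<Sum>k=1..n. (xhat \<omega> k - x0 k)\<^sup>2)
      \<le> (\<Sum>k=1..n. (xs k - x0 k)\<^sup>2)
        + 2 * (\<Sum>k\<in>{k\<in>{1..n}. \<bar>x0 k\<bar> > \<mu> k}. \<mu> k * \<bar>xhat \<omega> k - x0 k\<bar>)"
    using hard_threshold_oracle_inequality[where I="{1..n}" and x="xhat \<omega>" and x0=x0 and w=w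
        and m=\<mu>] noise \<mu>_nonneg minimal
    unfolding xs_def by simp
  thus ?thesis
    using emp_norm2_expand_diff[OF psi_on, where a="xhat \<omega>" and b=x0]
      emp_norm2_expand_diff[OF psi_on, where a=xs and b=x0]
    by (simp add: xs_def \<mu>_def r_def sum_distrib_left mult_ac)
qed

end
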